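(* Fix an integer $\ell\ge2$ and a real $p\in(0,1)$, and let $X$ be the number of derangements of $G_{k,\ell}(m)$. Then, as $k\to\infty$, \[ \mathbb{E}[X]\sim (k!)^\ell\, p^{k\ell}\exp\left\{\frac{\ell}{2}\left(1-\frac1p\right)\right\}. \]
   Context: For integers $k\ge1$, $\ell\ge2$, $D_{k,\ell}$ is the digraph with vertex set $\{v_{i,j}: i\in[k], j\in[\ell]\}$ in which $(v_{i,j},v_{i',j'})$ is an arc if and only if $j'\equiv j+1 \pmod \ell$ (the blow-up of a directed $\ell$-cycle, each vertex replaced by $k$ vertices); it has $k^2\ell$ arcs. Given $p\in(0,1)$, let $m=\lfloor pk^2\ell\rfloor$ and let $G_{k,\ell}(m)$ be a spanning subgraph of $D_{k,\ell}$ (same vertex set) chosen uniformly at random among those with exactly $m$ arcs. A permutation in a digraph $G=(V,E)$ is a bijection $f:V\to V$ such that for every $v$ either $f(v)=v$ or $(v,f(v))\in E$; a derangement is a permutation fixing no vertex. Asymptotics are as $k\to\infty$ with $\ell,p$ fixed; $A\sim B$ means $A/B\to1$. *)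

theory Defs
  imports "HOL-Analysis.Analysis" "HOL-Library.Landau_Symbols"
begin

text \<open>Vertex v_{i,j} is encoded as the pair (i,j) with i < k, j < l (0-based indices).\<close>

definition blowup_vertices :: "nat \<Rightarrow> nat \<Rightarrow> (nat \<times> nat) set" where
  "blowup_vertices k l = {..<k} \<times> {..<l}"

definition blowup_arcs :: "nat \<Rightarrow> nat \<Rightarrow> ((nat \<times> nat) \<times> (nat \<times> nat)) set" where
  "blowup_arcs k l = {(u, w). u \<in> blowup_vertices k l \<and> w \<in> blowup_vertices k l \<and>
                              snd w = (snd u + 1) mod l}"

text \<open>A permutation of the digraph (V,E): a bijection f of V with f v = v or (v, f v) an arc.
  Functions are taken extensional on V so that they are counted exactly once.\<close>
definition digraph_permutations :: "'a set \<Rightarrow> ('a \<times> 'a) set \<Rightarrow> ('a \<Rightarrow> 'a) set" where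
  "digraph_permutations V E = {f \<in> extensional V. bij_betw f V V \<and>
                                  (\<forall>v\<in>V. f v = v \<or> (v, f v) \<in> E)}"

definition digraph_derangements :: "'a set \<Rightarrow> ('a \<times> 'a) set \<Rightarrow> ('a \<Rightarrow> 'a) set" where
  "digraph_derangements V E = {f \<in> digraph_permutations V E. \<forall>v\<in>V. f v \<noteq> v}"

definition num_arcs :: "real \<Rightarrow> nat \<Rightarrow> nat \<Rightarrow> nat" where
  "num_arcs p k l = nat \<lfloor>p * real (k^2 * l)\<rfloor>"

text \<open>Expected number of derangements of G_{k,l}(m): the average over all spanning subgraphs
  of D_{k,l} with exactly m arcs (uniform distribution).\<close>
definition expected_derangements :: "nat \<Rightarrow> nat \<Rightarrow> nat \<Rightarrow> real" where
  "expected_derangements k l m =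
     (\<Sum>E\<in>{E. E \<subseteq> blowup_arcs k l \<and> card E = m}.
         real (card (digraph_derangements (blowup_vertices k l) E)))
     / real (card {E. E \<subseteq> blowup_arcs k l \<and> card E = m})"

end

theory Submission
  imports Defs "HOL-Combinatorics.Permutations" "HOL-Real_Asymp.Real_Asymp"
begin

text \<open>Every arc of D_{k,l} leads to the next layer, so a derangement of a subgraph E is exactly
  a bijection mapping each layer onto the next whose kl arcs all lie in E. There are (k!)^l such
  bijections, and each lies in C(N - kl, m - kl) of the C(N, m) subgraphs with m arcs, N = k^2 l.
  Hence E[X] = (k!)^l p^{kl} \<Prod>_{i<kl} (1 - y_i) with (m - i)/(N - i) = p (1 - y_i).
  The defects y_i are O(1/k), their sum tends to (1 - p) l / (2p) and the sum of their squares
  tends to 0, so the product tends to exp(-(1 - p) l / (2p)).\<close>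

lemma Suc_mod_neq_self:
  assumes "j < l" "2 \<le> (l::nat)"
  shows "(j + 1) mod l \<noteq> j"
  using assms by (cases "j + 1 = l") auto

lemma Suc_mod_eq_imp_eq:
  assumes "j < l" "j' < l" "(j + 1) mod l = (j' + 1) mod (l::nat)"
  shows "j = j'"
  using assms by (cases "j + 1 = l"; cases "j' + 1 = l") auto

lemma finite_blowup_vertices: "finite (blowup_vertices k l)"
  by (simp add: blowup_vertices_def)

lemma card_blowup_vertices: "card (blowup_vertices k l) = k * l"
  by (simp add: blowup_vertices_def card_cartesian_product)

lemma blowup_arcs_eq_Sigma:
  assumes "l > 0"
  shows "blowup_arcs k l = Sigma (blowup_vertices k l) (\<lambda>u. {..<k} \<times> {(snd u + 1) mod l})"
  using assms by (auto simp: blowup_arcs_def blowup_vertices_def)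

lemma finite_blowup_arcs: "finite (blowup_arcs k l)"
proof -
  have "blowup_arcs k l \<subseteq> blowup_vertices k l \<times> blowup_vertices k l"
    by (auto simp: blowup_arcs_def)
  then show ?thesis using finite_blowup_vertices finite_subset by blast
qed

lemma card_blowup_arcs:
  assumes "l > 0"
  shows "card (blowup_arcs k l) = k * k * l"
  using assms by (simp add: blowup_arcs_eq_Sigma finite_blowup_vertices
      card_cartesian_product card_blowup_vertices)

definition layer_shifts :: "nat \<Rightarrow> nat \<Rightarrow> (nat \<times> nat \<Rightarrow> nat \<times> nat) set" where
  "layer_shifts k l = {f \<in> extensional (blowup_vertices k l).
     bij_betw f (blowup_vertices k l) (blowup_vertices k l) \<and>
     (\<forall>v\<in>blowup_vertices k l. snd (f v) = (snd v + 1) mod l)}"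

lemma digraph_derangements_blowup:
  assumes "E \<subseteq> blowup_arcs k l" "l \<ge> 2"
  shows "digraph_derangements (blowup_vertices k l) E =
         {f \<in> layer_shifts k l. (\<lambda>v. (v, f v)) ` blowup_vertices k l \<subseteq> E}"
proof (rule set_eqI, rule iffI)
  fix f assume f: "f \<in> digraph_derangements (blowup_vertices k l) E"
  then have "\<forall>v\<in>blowup_vertices k l. (v, f v) \<in> E"
    by (auto simp: digraph_derangements_def digraph_permutations_def)
  with f assms(1) show "f \<in> {f \<in> layer_shifts k l. (\<lambda>v. (v, f v)) ` blowup_vertices k l \<subseteq> E}"
    by (auto simp: digraph_derangements_def digraph_permutations_def layer_shifts_def
        blowup_arcs_def)
next
  fix f assume f: "f \<in> {f \<in> layer_shifts k l. (\<lambda>v. (v, f v)) ` blowup_vertices k l \<subseteq> E}"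
  have "snd (f v) \<noteq> snd v" if "v \<in> blowup_vertices k l" for v
    using that f Suc_mod_neq_self[OF _ assms(2), of "snd v"]
    by (auto simp: layer_shifts_def blowup_vertices_def)
  then have "f v \<noteq> v" if "v \<in> blowup_vertices k l" for v
    using that by metis
  with f show "f \<in> digraph_derangements (blowup_vertices k l) E"
    by (auto simp: digraph_derangements_def digraph_permutations_def layer_shifts_def)
qed

definition glue_layers :: "nat \<Rightarrow> nat \<Rightarrow> (nat \<Rightarrow> nat \<Rightarrow> nat) \<Rightarrow> nat \<times> nat \<Rightarrow> nat \<times> nat" where
  "glue_layers k l \<sigma> = (\<lambda>v\<in>blowup_vertices k l. (\<sigma> (snd v) (fst v), (snd v + 1) mod l))"

definition split_layers :: "nat \<Rightarrow> nat \<Rightarrow> (nat \<times> nat \<Rightarrow> nat \<times> nat) \<Rightarrow> nat \<Rightarrow> nat \<Rightarrow> nat" where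
  "split_layers k l f = (\<lambda>j\<in>{..<l}. \<lambda>i. if i < k then fst (f (i, j)) else i)"

lemma glue_layers_in_layer_shifts:
  assumes "l > 0" and \<sigma>: "\<And>j. j < l \<Longrightarrow> \<sigma> j permutes {..<k}"
  shows "glue_layers k l \<sigma> \<in> layer_shifts k l"
proof -
  let ?V = "blowup_vertices k l" and ?f = "glue_layers k l \<sigma>"
  have into: "?f ` ?V \<subseteq> ?V"
    using assms permutes_in_image[OF \<sigma>] by (auto simp: glue_layers_def blowup_vertices_def)
  have "inj_on ?f ?V"
  proof (rule inj_onI)
    fix u v assume uv: "u \<in> ?V" "v \<in> ?V" "?f u = ?f v"
    then have "snd u = snd v"
      using Suc_mod_eq_imp_eq by (auto simp: glue_layers_def blowup_vertices_def)
    moreover have "\<sigma> (snd u) (fst u) = \<sigma> (snd v) (fst v)"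
      using uv by (auto simp: glue_layers_def)
    ultimately show "u = v"
      using uv permutes_inj[OF \<sigma>, of "snd u"]
      by (auto simp: blowup_vertices_def prod_eq_iff dest: injD)
  qed
  with endo_inj_surj[OF finite_blowup_vertices into] show ?thesis
    by (auto simp: layer_shifts_def bij_betw_def glue_layers_def)
qed

lemma split_layers_permutes:
  assumes f: "f \<in> layer_shifts k l" and j: "j < l"
  shows "split_layers k l f j permutes {..<k}"
proof (rule bij_imp_permutes)
  let ?V = "blowup_vertices k l" and ?h = "\<lambda>i. fst (f (i, j))"
  have bij: "bij_betw f ?V ?V" and layer: "\<forall>v\<in>?V. snd (f v) = (snd v + 1) mod l"
    using f by (auto simp: layer_shifts_def)
  have into: "?h ` {..<k} \<subseteq> {..<k}"
    using j bij_betwE[OF bij] by (force simp: blowup_vertices_def)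
  have "inj_on ?h {..<k}"
  proof (rule inj_onI)
    fix a b assume ab: "a \<in> {..<k}" "b \<in> {..<k}" "?h a = ?h b"
    then have "(a, j) \<in> ?V" "(b, j) \<in> ?V" using j by (auto simp: blowup_vertices_def)
    with ab layer have "f (a, j) = f (b, j)" by (simp add: prod_eq_iff)
    with \<open>(a, j) \<in> ?V\<close> \<open>(b, j) \<in> ?V\<close> show "a = b"
      using bij by (auto simp: bij_betw_def dest: inj_onD)
  qed
  with endo_inj_surj[OF _ into] have "bij_betw ?h {..<k} {..<k}"
    by (simp add: bij_betw_def)
  then show "bij_betw (split_layers k l f j) {..<k} {..<k}"
    by (rule bij_betw_cong[THEN iffD1, rotated]) (simp add: split_layers_def j)
  show "\<And>i. i \<notin> {..<k} \<Longrightarrow> split_layers k l f j i = i"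
    by (simp add: split_layers_def j)
qed

lemma card_layer_shifts:
  assumes "l > 0"
  shows "card (layer_shifts k l) = fact k ^ l"
proof -
  let ?P = "PiE {..<l} (\<lambda>_. {\<sigma>. \<sigma> permutes {..<k}})"
  have "bij_betw (glue_layers k l) ?P (layer_shifts k l)"
  proof (rule bij_betw_byWitness[where f' = "split_layers k l"])
    show "\<forall>\<sigma>\<in>?P. split_layers k l (glue_layers k l \<sigma>) = \<sigma>"
    proof (intro ballI ext)
      fix \<sigma> j i assume \<sigma>: "\<sigma> \<in> ?P"
      show "split_layers k l (glue_layers k l \<sigma>) j i = \<sigma> j i"
      proof (cases "j < l")
        case True
        with \<sigma> have "\<sigma> j permutes {..<k}" by auto
        then have "\<sigma> j i = i" if "\<not> i < k"
          using that by (meson lessThan_iff permutes_not_in)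
        with True show ?thesis
          by (auto simp: split_layers_def glue_layers_def blowup_vertices_def)
      next
        case False
        with \<sigma> show ?thesis
          using PiE_arb[of \<sigma> "{..<l}" _ j] by (simp add: split_layers_def)
      qed
    qed
    show "\<forall>f\<in>layer_shifts k l. glue_layers k l (split_layers k l f) = f"
    proof (intro ballI ext)
      fix f v assume f: "f \<in> layer_shifts k l"
      show "glue_layers k l (split_layers k l f) v = f v"
      proof (cases "v \<in> blowup_vertices k l")
        case True
        obtain i j where v: "v = (i, j)" by (cases v)
        with True f have "snd (f (i, j)) = (j + 1) mod l" by (simp add: layer_shifts_def)
        moreover have "i < k" "j < l" using True by (auto simp: v blowup_vertices_def)
        ultimately show ?thesis
          by (simp add: v split_layers_def glue_layers_def blowup_vertices_def prod_eq_iff)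
      next
        case False
        with f show ?thesis
          using extensional_arb[of f "blowup_vertices k l" v]
          by (simp add: glue_layers_def layer_shifts_def)
      qed
    qed
    show "glue_layers k l ` ?P \<subseteq> layer_shifts k l"
      using glue_layers_in_layer_shifts[OF assms] by (auto simp: PiE_iff)
    show "split_layers k l ` layer_shifts k l \<subseteq> ?P"
      using split_layers_permutes by (auto simp: PiE_iff split_layers_def)
  qed
  then show ?thesis
    by (simp add: bij_betw_same_card[symmetric] card_PiE card_permutations)
qed

lemma card_supersets:
  assumes "finite A" "T \<subseteq> A" "card T \<le> m"
  shows "card {E. E \<subseteq> A \<and> card E = m \<and> T \<subseteq> E} = (card A - card T) choose (m - card T)"
proof -
  have T: "finite T" using assms finite_subset by blast
  have "bij_betw (\<lambda>E. E - T) {E. E \<subseteq> A \<and> card E = m \<and> T \<subseteq> E}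
          {B. B \<subseteq> A - T \<and> card B = m - card T}"
  proof (rule bij_betw_byWitness[where f' = "\<lambda>B. B \<union> T"])
    show "(\<lambda>E. E - T) ` {E. E \<subseteq> A \<and> card E = m \<and> T \<subseteq> E}
        \<subseteq> {B. B \<subseteq> A - T \<and> card B = m - card T}"
      using T by (auto simp: card_Diff_subset)
    show "(\<lambda>B. B \<union> T) ` {B. B \<subseteq> A - T \<and> card B = m - card T}
        \<subseteq> {E. E \<subseteq> A \<and> card E = m \<and> T \<subseteq> E}"
    proof safe
      fix B assume B: "B \<subseteq> A - T" "card B = m - card T"
      then have "finite B" using assms(1) finite_subset by blast
      with B T assms(3) show "card (B \<union> T) = m" by (subst card_Un_disjoint) auto
    qed (use assms(2) in auto)
  qed auto
  then have "card {E. E \<subseteq> A \<and> card E = m \<and> T \<subseteq> E} = card (A - T) choose (m - card T)"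
    using assms(1) by (simp add: bij_betw_same_card n_subsets)
  with assms(2) T show ?thesis by (simp add: card_Diff_subset)
qed

lemma sum_card_derangements_blowup:
  assumes "l \<ge> 2" "k * l \<le> m"
  shows "(\<Sum>E | E \<subseteq> blowup_arcs k l \<and> card E = m.
            card (digraph_derangements (blowup_vertices k l) E))
         = fact k ^ l * ((k * k * l - k * l) choose (m - k * l))"
proof -
  let ?A = "blowup_arcs k l" and ?V = "blowup_vertices k l"
  let ?S = "{E. E \<subseteq> ?A \<and> card E = m}" and ?arcs = "\<lambda>f. (\<lambda>v. (v, f v)) ` ?V"
  have "finite ?S" using finite_blowup_arcs by simp
  moreover have "finite (layer_shifts k l)"
    using card_layer_shifts[of l k] assms(1) by (intro card_ge_0_finite) simp
  moreover have "card {E \<in> ?S. ?arcs f \<subseteq> E} = (k * k * l - k * l) choose (m - k * l)"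
    if f: "f \<in> layer_shifts k l" for f
  proof -
    have "?arcs f \<subseteq> ?A"
      using f bij_betwE by (fastforce simp: layer_shifts_def blowup_arcs_def)
    moreover have "card (?arcs f) = k * l"
      by (subst card_image) (auto simp: inj_on_def card_blowup_vertices)
    ultimately show ?thesis
      using card_supersets[OF finite_blowup_arcs[of k l], of "?arcs f" m] assms
      by (simp add: conj_assoc card_blowup_arcs)
  qed
  ultimately have "(\<Sum>E\<in>?S. card {f \<in> layer_shifts k l. ?arcs f \<subseteq> E})
      = (\<Sum>f\<in>layer_shifts k l. (k * k * l - k * l) choose (m - k * l))"
    using sum.swap_restrict[of ?S "layer_shifts k l" "\<lambda>_ _. 1::nat"] by simp
  also have "\<dots> = fact k ^ l * ((k * k * l - k * l) choose (m - k * l))"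
    using card_layer_shifts assms(1) by simp
  finally show ?thesis
    using digraph_derangements_blowup assms(1) by simp
qed

lemma fact_eq_fact_diff_times_prod:
  "n \<le> m \<Longrightarrow> (fact m :: real) = fact (m - n) * (\<Prod>i<n. real m - real i)"
proof (induction n)
  case (Suc n)
  then have "m - n = Suc (m - Suc n)" "real (m - n) = real m - real n" by auto
  with Suc show ?case by (simp add: algebra_simps)
qed simp

lemma binomial_ratio_eq_prod:
  assumes "n \<le> m" "m \<le> N"
  shows "real ((N - n) choose (m - n)) / real (N choose m)
         = (\<Prod>i<n. (real m - real i) / (real N - real i))"
proof -
  have "(\<Prod>i<n. real N - real i) \<noteq> 0"
    using assms by (subst prod_zero_iff) auto
  with assms show ?thesis
    by (simp add: binomial_fact fact_eq_fact_diff_times_prod[of n m]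
        fact_eq_fact_diff_times_prod[of n N] prod_dividef field_simps)
qed

lemma expected_derangements_eq_prod:
  assumes "l \<ge> 2" "k * l \<le> m" "m \<le> k * k * l"
  shows "expected_derangements k l m
         = fact k ^ l * (\<Prod>i<k * l. (real m - real i) / (real (k * k * l) - real i))"
proof -
  have "card {E. E \<subseteq> blowup_arcs k l \<and> card E = m} = (k * k * l) choose m"
    using assms(1) by (simp add: n_subsets finite_blowup_arcs card_blowup_arcs)
  moreover have "k * l \<le> k * k * l" by simp
  ultimately have "expected_derangements k l m
      = fact k ^ l * (real ((k * k * l - k * l) choose (m - k * l)) / real ((k * k * l) choose m))"
    using assms by (simp add: expected_derangements_def sum_card_derangements_blowup
        flip: of_nat_sum)
  with assms show ?thesis by (simp add: binomial_ratio_eq_prod)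
qed

lemma tendsto_prod_one_minus:
  fixes y :: "'a \<Rightarrow> nat \<Rightarrow> real" and n :: "'a \<Rightarrow> nat"
  assumes small: "eventually (\<lambda>x. \<forall>i<n x. 0 \<le> y x i \<and> y x i \<le> 1/2) F"
    and lin: "((\<lambda>x. \<Sum>i<n x. y x i) \<longlongrightarrow> c) F"
    and quad: "((\<lambda>x. \<Sum>i<n x. (y x i)\<^sup>2) \<longlongrightarrow> 0) F"
  shows "((\<lambda>x. \<Prod>i<n x. 1 - y x i) \<longlongrightarrow> exp (- c)) F"
proof -
  define L where "L x = (\<Sum>i<n x. ln (1 - y x i))" for x
  have bounds: "eventually (\<lambda>x. - (\<Sum>i<n x. y x i) - 2 * (\<Sum>i<n x. (y x i)\<^sup>2) \<le> L x
      \<and> L x \<le> - (\<Sum>i<n x. y x i) \<and> (\<Prod>i<n x. 1 - y x i) = exp (L x)) F"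
    using small
  proof eventually_elim
    case (elim x)
    have "- y x i - 2 * (y x i)\<^sup>2 \<le> ln (1 - y x i)" "ln (1 - y x i) \<le> - y x i"
      if "i < n x" for i
      using elim that ln_one_minus_pos_lower_bound[of "y x i"] ln_le_minus_one[of "1 - y x i"]
      by auto
    then have "(\<Sum>i<n x. - y x i - 2 * (y x i)\<^sup>2) \<le> L x" "L x \<le> (\<Sum>i<n x. - y x i)"
      unfolding L_def by (auto intro: sum_mono)
    moreover have "(\<Prod>i<n x. 1 - y x i) = exp (L x)"
      unfolding L_def exp_sum[OF finite_lessThan]
    proof (rule prod.cong)
      fix i assume "i \<in> {..<n x}"
      with elim have "0 < 1 - y x i" by auto
      then show "1 - y x i = exp (ln (1 - y x i))" by simp
    qed simp
    ultimately show ?case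
      by (simp add: sum_subtractf sum_negf sum_distrib_left)
  qed
  have lower: "((\<lambda>x. - (\<Sum>i<n x. y x i) - 2 * (\<Sum>i<n x. (y x i)\<^sup>2)) \<longlongrightarrow> - c - 2 * 0) F"
    by (intro tendsto_intros lin quad)
  have upper: "((\<lambda>x. - (\<Sum>i<n x. y x i)) \<longlongrightarrow> - c) F"
    by (intro tendsto_intros lin)
  have "(L \<longlongrightarrow> - c) F"
    by (rule tendsto_sandwich[OF _ _ lower[simplified] upper])
      (use bounds in \<open>auto elim: eventually_mono\<close>)
  then have "((\<lambda>x. exp (L x)) \<longlongrightarrow> exp (- c)) F"
    by (rule tendsto_exp)
  then show ?thesis
    by (rule Lim_transform_eventually) (use bounds in \<open>auto elim: eventually_mono\<close>)
qed

lemma sum_of_nat_lessThan: "(\<Sum>i<n. real i) = real n * (real n - 1) / 2"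
  by (induction n) (auto simp: field_simps)

lemma defect_bounds:
  fixes p N \<theta> :: real and n i :: nat
  assumes p: "0 < p" "p < 1" and \<theta>: "0 \<le> \<theta>" "\<theta> < 1" and "real n < N" "i < n"
  defines "y \<equiv> (\<theta> + (1 - p) * real i) / (p * (N - real i))"
  shows "(1 - p) / (p * N) * real i \<le> y"
    and "y \<le> 1 / (p * (N - real n)) + (1 - p) / (p * (N - real n)) * real i"
    and "y \<le> (1 + (1 - p) * real n) / (p * (N - real n))"
proof -
  have iN: "0 < N - real i" "0 < N - real n" using assms by linarith+
  have "0 \<le> p * N" using p iN by simp
  then have "(1 - p) / (p * N) * real i \<le> (\<theta> + (1 - p) * real i) / (p * N)"
    using \<theta> by (simp add: divide_right_mono)
  also have "\<dots> \<le> y"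
    unfolding y_def using p \<theta> iN by (intro divide_left_mono mult_pos_pos) auto
  finally show "(1 - p) / (p * N) * real i \<le> y" .
  have "y \<le> (1 + (1 - p) * real i) / (p * (N - real i))"
    unfolding y_def using p \<theta> iN by (intro divide_right_mono) auto
  also have "\<dots> \<le> (1 + (1 - p) * real i) / (p * (N - real n))"
    using p iN \<open>i < n\<close> by (intro divide_left_mono mult_pos_pos mult_left_mono) auto
  finally show "y \<le> 1 / (p * (N - real n)) + (1 - p) / (p * (N - real n)) * real i"
    by (simp add: add_divide_distrib)
  also have "\<dots> \<le> (1 + (1 - p) * real n) / (p * (N - real n))"
    using p iN \<open>i < n\<close> by (simp add: add_divide_distrib divide_right_mono)
  finally show "y \<le> (1 + (1 - p) * real n) / (p * (N - real n))" .
qed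

lemma defect_sums_tendsto:
  fixes p :: real and l :: nat and \<theta> :: "nat \<Rightarrow> real"
  assumes l: "l > 0" and p: "0 < p" "p < 1" and \<theta>: "\<And>k. 0 \<le> \<theta> k" "\<And>k. \<theta> k < 1"
  defines "y \<equiv> \<lambda>k i. (\<theta> k + (1 - p) * real i) / (p * (real k * real k * real l - real i))"
  shows "eventually (\<lambda>k. \<forall>i<k * l. 0 \<le> y k i \<and> y k i \<le> 1/2) sequentially"
    and "(\<lambda>k. \<Sum>i<k * l. y k i) \<longlonglongrightarrow> (1 - p) * real l / (2 * p)"
    and "(\<lambda>k. \<Sum>i<k * l. (y k i)\<^sup>2) \<longlonglongrightarrow> 0"
proof -
  define N where "N k = real k * real k * real l" for k :: nat
  define V where "V k = (1 + (1 - p) * real (k * l)) / (p * (N k - real (k * l)))" for k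
  define c where "c = (1 - p) * real l / (2 * p)"
  have "eventually (\<lambda>k. real (k * l) < N k) sequentially"
    using eventually_ge_at_top[of 2]
    by eventually_elim (use l in \<open>simp add: N_def\<close>)
  then have bounds: "eventually (\<lambda>k. \<forall>i<k * l. 0 \<le> y k i \<and>
      (1 - p) / (p * N k) * real i \<le> y k i \<and>
      y k i \<le> 1 / (p * (N k - real (k * l))) + (1 - p) / (p * (N k - real (k * l))) * real i \<and>
      y k i \<le> V k) sequentially"
  proof eventually_elim
    case (elim k)
    have "0 \<le> y k i" if "i < k * l" for i
    proof -
      from that have "real i < real (k * l)" by (simp only: of_nat_less_iff)
      with p \<theta>[of k] elim show ?thesis
        unfolding y_def N_def by (intro divide_nonneg_pos) auto
    qed
    with defect_bounds[OF p \<theta>(1)[of k] \<theta>(2)[of k] elim] show ?case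
      by (simp add: y_def V_def N_def)
  qed
  have "V \<longlonglongrightarrow> 0"
    unfolding V_def N_def using l p by real_asymp
  then have "eventually (\<lambda>k. V k < 1/2) sequentially"
    by (rule order_tendstoD) simp
  with bounds show "eventually (\<lambda>k. \<forall>i<k * l. 0 \<le> y k i \<and> y k i \<le> 1/2) sequentially"
    by eventually_elim force
  define lo where "lo k i = (1 - p) / (p * N k) * real i" for k i :: nat
  define up where
    "up k i = 1 / (p * (N k - real (k * l))) + (1 - p) / (p * (N k - real (k * l))) * real i"
    for k i :: nat
  have lin_bounds: "eventually (\<lambda>k. (\<Sum>i<k * l. lo k i) \<le> (\<Sum>i<k * l. y k i)
      \<and> (\<Sum>i<k * l. y k i) \<le> (\<Sum>i<k * l. up k i)) sequentially"
    using bounds by eventually_elim (auto simp: lo_def up_def intro!: sum_mono)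
  have "(\<lambda>k. \<Sum>i<k * l. lo k i) \<longlonglongrightarrow> c"
    unfolding lo_def sum_distrib_left[symmetric] sum_of_nat_lessThan N_def c_def
    using l p by (real_asymp simp: field_simps)
  moreover have "(\<lambda>k. \<Sum>i<k * l. up k i) \<longlonglongrightarrow> c"
    unfolding up_def sum.distrib sum_distrib_left[symmetric] sum_of_nat_lessThan sum_constant
      card_lessThan N_def c_def
    using l p by (real_asymp simp: field_simps)
  ultimately show "(\<lambda>k. \<Sum>i<k * l. y k i) \<longlonglongrightarrow> c"
    using lin_bounds by (auto intro: tendsto_sandwich elim: eventually_mono)
  have quad_bounds: "eventually (\<lambda>k. 0 \<le> (\<Sum>i<k * l. (y k i)\<^sup>2)
      \<and> (\<Sum>i<k * l. (y k i)\<^sup>2) \<le> (\<Sum>i<k * l. (V k)\<^sup>2)) sequentially"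
    using bounds by eventually_elim (intro conjI sum_nonneg sum_mono power_mono; simp)
  have "(\<lambda>k. \<Sum>i<k * l. (V k)\<^sup>2) \<longlonglongrightarrow> 0"
    unfolding sum_constant card_lessThan V_def N_def using l p by real_asymp
  then show "(\<lambda>k. \<Sum>i<k * l. (y k i)\<^sup>2) \<longlonglongrightarrow> 0"
    using quad_bounds by (auto intro: tendsto_sandwich[OF _ _ tendsto_const] elim: eventually_mono)
qed

lemma prod_num_arcs_tendsto:
  fixes p :: real and l :: nat
  assumes l: "l > 0" and p: "0 < p" "p < 1"
  shows "(\<lambda>k. \<Prod>i<k * l. (real (num_arcs p k l) - real i) / (p * (real (k * k * l) - real i)))
         \<longlonglongrightarrow> exp (real l / 2 * (1 - 1 / p))"
proof -
  define N where "N k = real k * real k * real l" for k :: nat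
  define \<theta> where "\<theta> k = p * N k - of_int \<lfloor>p * N k\<rfloor>" for k
  define y where "y k i = (\<theta> k + (1 - p) * real i) / (p * (N k - real i))" for k i :: nat
  have \<theta>: "0 \<le> \<theta> k" "\<theta> k < 1" for k
    unfolding \<theta>_def by linarith+
  have "(real (num_arcs p k l) - real i) / (p * (real (k * k * l) - real i)) = 1 - y k i"
    if "i < k * l" for k i
  proof -
    have "real (num_arcs p k l) = p * N k - \<theta> k"
      using p by (simp add: num_arcs_def \<theta>_def N_def power2_eq_square)
    moreover have "i < k * k * l"
      using that le_square mult_le_mono1 dual_order.strict_trans1 by meson
    then have "real i < N k"
      unfolding N_def by (simp flip: of_nat_mult)
    ultimately show ?thesis
      using p by (simp add: y_def N_def field_simps)
  qed
  then have "(\<lambda>k. \<Prod>i<k * l. (real (num_arcs p k l) - real i) / (p * (real (k * k * l) - real i)))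
      = (\<lambda>k. \<Prod>i<k * l. 1 - y k i)"
    by (intro ext prod.cong) (simp_all only: lessThan_iff)
  moreover have "(\<lambda>k. \<Prod>i<k * l. 1 - y k i) \<longlonglongrightarrow> exp (- ((1 - p) * real l / (2 * p)))"
  proof (rule tendsto_prod_one_minus)
    from defect_sums_tendsto[of l p \<theta>, OF l p \<theta>(1) \<theta>(2)]
    show "eventually (\<lambda>k. \<forall>i<k * l. 0 \<le> y k i \<and> y k i \<le> 1/2) sequentially"
      and "(\<lambda>k. \<Sum>i<k * l. y k i) \<longlonglongrightarrow> (1 - p) * real l / (2 * p)"
      and "(\<lambda>k. \<Sum>i<k * l. (y k i)\<^sup>2) \<longlonglongrightarrow> 0"
      by (simp_all only: y_def N_def)
  qed
  moreover have "- ((1 - p) * real l / (2 * p)) = real l / 2 * (1 - 1 / p)"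
    using p by (simp add: field_simps)
  ultimately show ?thesis
    by (simp only:)
qed

lemma eventually_num_arcs_bounds:
  assumes "0 < p" "p < 1"
  shows "eventually (\<lambda>k. k * l \<le> num_arcs p k l \<and> num_arcs p k l \<le> k * k * l) sequentially"
  using eventually_ge_at_top[of "nat \<lceil>1 / p\<rceil>"]
proof eventually_elim
  case (elim k)
  then have "1 \<le> p * real k"
    using assms by (simp add: field_simps nat_le_iff ceiling_le_iff)
  then have "real (k * l) \<le> p * real (k\<^sup>2 * l)"
    using mult_right_mono[of 1 "p * real k" "real (k * l)"]
    by (simp add: power2_eq_square algebra_simps)
  moreover have "p * real (k\<^sup>2 * l) \<le> real (k\<^sup>2 * l)"
    using assms by (simp add: mult_left_le_one_le)
  ultimately show ?case
    by (simp add: num_arcs_def le_nat_floor nat_le_iff floor_le_iff power2_eq_square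
        le_floor_iff flip: of_nat_mult)
qed

lemma eventually_expected_derangements_num_arcs:
  assumes "l \<ge> 2" "0 < p" "p < 1"
  shows "eventually (\<lambda>k. expected_derangements k l (num_arcs p k l) = fact k ^ l * p ^ (k * l) *
    (\<Prod>i<k * l. (real (num_arcs p k l) - real i) / (p * (real (k * k * l) - real i)))) sequentially"
  using eventually_num_arcs_bounds[OF assms(2,3), of l]
proof eventually_elim
  case (elim k)
  have "expected_derangements k l (num_arcs p k l)
      = fact k ^ l * (\<Prod>i<k * l. (real (num_arcs p k l) - real i) / (real (k * k * l) - real i))"
    using elim assms(1) by (simp add: expected_derangements_eq_prod)
  also have "\<dots> = fact k ^ l * (\<Prod>i<k * l.
      p * ((real (num_arcs p k l) - real i) / (p * (real (k * k * l) - real i))))"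
    using assms(2) by simp
  finally show ?case
    by (simp only: prod.distrib prod_constant card_lessThan mult.assoc)
qed

theorem mainTheorem5:
  fixes l :: nat and p :: real
  assumes "l \<ge> 2" and "0 < p" and "p < 1"
  shows "(\<lambda>k. expected_derangements k l (num_arcs p k l)) \<sim>[at_top]
         (\<lambda>k. (fact k) ^ l * p ^ (k * l) * exp (real l / 2 * (1 - 1 / p)))"
proof (rule asymp_equivI')
  define c where "c = exp (real l / 2 * (1 - 1 / p))"
  define P where "P k = (\<Prod>i<k * l. (real (num_arcs p k l) - real i) / (p * (real (k * k * l) - real i)))"
    for k
  have "(\<lambda>k. P k / c) \<longlonglongrightarrow> c / c"
    using prod_num_arcs_tendsto[of l p] assms unfolding P_def c_def
    by (intro tendsto_divide tendsto_const) auto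
  moreover have "eventually (\<lambda>k. P k / c
      = expected_derangements k l (num_arcs p k l) / (fact k ^ l * p ^ (k * l) * c)) sequentially"
    using eventually_expected_derangements_num_arcs[OF assms]
    by eventually_elim (use assms(2) in \<open>simp add: P_def c_def\<close>)
  ultimately show "(\<lambda>k. expected_derangements k l (num_arcs p k l) /
      (fact k ^ l * p ^ (k * l) * exp (real l / 2 * (1 - 1 / p)))) \<longlonglongrightarrow> 1"
    unfolding c_def by (auto dest: Lim_transform_eventually)
qed

end
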